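(* Let $q\ge 2$, $n\ge 1$ and $\varepsilon\in\mathbb{N}$. Let $x\in\mathbb{Z}_q^n$ be a hidden vector, and suppose the attacker has access to an oracle $\texttt{Match}_{x,\varepsilon}$ which, on a query $y\in\mathbb{Z}_q^n$, returns $1$ if $d(x,y)\le\varepsilon$ and $0$ otherwise, and additionally always reveals (regardless of the threshold) the set of error positions $\{i: x_i\neq y_i\}$, but not the values $x_i$. Then the attacker can recover $x$ using $\mathcal{O}(q)$ queries to $\texttt{Match}_{x,\varepsilon}$.
   Context: $\mathbb{Z}_q^n=\{0,\dots,q-1\}^n$ is equipped with the Hamming distance $d(x,y)=|\{i\in\{1,\dots,n\}: x_i\neq y_i\}|$. Complexity is measured as the number of oracle queries. *)

theory Defs
  imports Main
begin

definition Zqn :: "nat \<Rightarrow> nat \<Rightarrow> nat list set" where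
  "Zqn q n = {x. length x = n \<and> (\<forall>a\<in>set x. a < q)}"

definition err_pos :: "nat list \<Rightarrow> nat list \<Rightarrow> nat set" where
  "err_pos x y = {i. i < length x \<and> x ! i \<noteq> y ! i}"

definition hamming :: "nat list \<Rightarrow> nat list \<Rightarrow> nat" where
  "hamming x y = card (err_pos x y)"

type_synonym answer = "bool \<times> nat set"

definition match_oracle :: "nat list \<Rightarrow> nat \<Rightarrow> nat list \<Rightarrow> answer" where
  "match_oracle x eps y = (hamming x y \<le> eps, err_pos x y)"

text \<open>An adaptive attacker chooses each query from the history of previous
  queries and answers; run s orc k is the history after k queries.\<close>
fun run :: "((nat list \<times> answer) list \<Rightarrow> nat list) \<Rightarrow> (nat list \<Rightarrow> answer)
             \<Rightarrow> nat \<Rightarrow> (nat list \<times> answer) list" where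
  "run s orc 0 = []"
| "run s orc (Suc k) = (let h = run s orc k; y = s h in h @ [(y, orc y)])"

end

theory Submission
  imports Defs
begin

(* Query the q constant vectors (c,...,c), c < q. Coordinate i is absent from the error set
   of the c-th answer exactly when x_i = c, so the error sets alone determine x and the
   threshold bit is never needed: q non-adaptive queries suffice. *)

definition constant_queries :: "nat \<Rightarrow> (nat list \<times> answer) list \<Rightarrow> nat list" where
  "constant_queries n h = replicate n (length h)"

definition decode_agreements :: "(nat list \<times> answer) list \<Rightarrow> nat list" where
  "decode_agreements h = map (\<lambda>i. LEAST c. i \<notin> snd (snd (h ! c))) [0..<length (fst (hd h))]"

lemma run_length_indexed:
  "run (\<lambda>h. f (length h)) orc k = map (\<lambda>j. (f j, orc (f j))) [0..<k]"
  by (induction k) (simp_all add: Let_def)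

lemma run_constant_queries:
  "run (constant_queries n) orc k = map (\<lambda>c. (replicate n c, orc (replicate n c))) [0..<k]"
  unfolding constant_queries_def[abs_def] by (rule run_length_indexed)

lemma notin_err_pos_replicate_iff:
  assumes "i < length x"
  shows "i \<notin> err_pos x (replicate (length x) c) \<longleftrightarrow> x ! i = c"
  using assms by (simp add: err_pos_def)

lemma decode_agreements_constant_queries:
  assumes x: "x \<in> Zqn q n" and "q > 0" and err: "\<And>y. snd (orc y) = err_pos x y"
  shows "decode_agreements (run (constant_queries n) orc q) = x"
proof -
  let ?h = "run (constant_queries n) orc q"
  have len: "length x = n" and below_q: "\<And>i. i < n \<Longrightarrow> x ! i < q"
    using x by (auto simp: Zqn_def)
  have agree: "i \<notin> snd (snd (?h ! c)) \<longleftrightarrow> x ! i = c" if "i < n" "c < q" for i c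
    using that len notin_err_pos_replicate_iff[of i x c]
    by (simp add: run_constant_queries err)
  have least: "(LEAST c. i \<notin> snd (snd (?h ! c))) = x ! i" if i: "i < n" for i
  proof (rule Least_equality)
    show "i \<notin> snd (snd (?h ! (x ! i)))"
      using agree[OF i below_q[OF i]] by simp
    show "x ! i \<le> c" if "i \<notin> snd (snd (?h ! c))" for c
    proof (rule ccontr)
      assume "\<not> x ! i \<le> c"
      with below_q[OF i] have "c < q" by simp
      with agree[OF i] that \<open>\<not> x ! i \<le> c\<close> show False by simp
    qed
  qed
  have "fst (hd ?h) = replicate n 0"
    using \<open>q > 0\<close> by (simp add: run_constant_queries hd_map upt_conv_Cons)
  then show ?thesis
    using len least by (intro nth_equalityI) (simp_all add: decode_agreements_def)
qed

theorem theorem6: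
  shows "\<exists>C::nat. \<forall>q::nat \<ge> 2. \<forall>n::nat \<ge> 1. \<forall>eps::nat.
    \<exists>k \<le> C * q. \<exists>(s :: (nat list \<times> answer) list \<Rightarrow> nat list)
                     (out :: (nat list \<times> answer) list \<Rightarrow> nat list).
      \<forall>x \<in> Zqn q n.
        (\<forall>p \<in> set (run s (match_oracle x eps) k). fst p \<in> Zqn q n) \<and>
        out (run s (match_oracle x eps) k) = x"
proof (rule exI[of _ 1], intro allI impI)
  fix q n eps :: nat
  assume "q \<ge> 2" "n \<ge> 1"
  have "(\<forall>p \<in> set (run (constant_queries n) (match_oracle x eps) q). fst p \<in> Zqn q n) \<and>
        decode_agreements (run (constant_queries n) (match_oracle x eps) q) = x"
    if "x \<in> Zqn q n" for x
    using that \<open>q \<ge> 2\<close> decode_agreements_constant_queries[of x q n "match_oracle x eps"]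
    by (auto simp: run_constant_queries Zqn_def match_oracle_def)
  then show "\<exists>k \<le> 1 * q. \<exists>s out. \<forall>x \<in> Zqn q n.
        (\<forall>p \<in> set (run s (match_oracle x eps) k). fst p \<in> Zqn q n) \<and>
        out (run s (match_oracle x eps) k) = x"
    by (intro exI[of _ q] conjI exI[of _ "constant_queries n"] exI[of _ decode_agreements]) auto
qed

end
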